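(* Let $\beta_1\in(0,1)$, $\beta_0=1-\beta_1$, $\rho\in(0,1)$, $\theta\in(0,1)$, $\lambda\ge 0$, $N_0>0$, and assume $$N_0\le \frac{\lambda(1-\rho)(1-\beta_1\theta)^2}{\rho\,\theta^2}.$$ For $s\in[0,1]$ let $$\bar m_1(s)=\tfrac{\beta_0\beta_1(1-\rho)s}{\rho+\beta_1 s(1-\rho)},\ \bar m_2(s)=\tfrac{\beta_0\rho}{\rho+\beta_1 s(1-\rho)},\ \bar m_3(s)=\tfrac{\beta_1^2(1-\rho)s}{\rho+\beta_1 s(1-\rho)},\ \bar m_4(s)=\tfrac{\beta_1\rho}{\rho+\beta_1 s(1-\rho)},$$ $$E(s)=\frac{\theta N_0\, s}{1-\theta \bar m_4(s)}+\lambda\big(\bar m_2(s)+\bar m_4(s)\big),$$ and define $$N_0^0=\frac{\lambda\beta_1(1-\rho)(1-\theta\beta_1)}{\rho\theta},\qquad N_0^1=\frac{\lambda\beta_1(1-\rho)\rho\,\dfrac{(\rho+\beta_1-\beta_1\rho(1+\theta))^2}{(\beta_1+\rho-\beta_1\rho)^2}}{\theta\big(2\beta_1(1-\rho)\rho(1-\theta\beta_1)+\rho^2(1-\theta\beta_1)+\beta_1^2(1-\rho)^2\big)}.$$ Let $s_4^*$ denote the optimal equilibrium control, i.e. a minimizer of $E$ over $[0,1]$, and $\vec m^*=(\bar m_1(s_4^* ),\dots,\bar m_4(s_4^* ))$. Then: (i) if $N_0\ge N_0^0$, then $s_4^*=0$ and $\vec m^*=(0,\beta_0,0,\beta_1)$;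 (ii) if $N_0\le N_0^1$, then $s_4^*=1$ and $$m_1^*=\tfrac{\beta_0\beta_1(1-\rho)}{\beta_1(1-\rho)+\rho},\ m_2^*=\tfrac{\beta_0\rho}{\rho+\beta_1(1-\rho)},\ m_3^*=\tfrac{\beta_1^2(1-\rho)}{\rho+\beta_1(1-\rho)},\ m_4^*=\tfrac{\beta_1\rho}{\rho+\beta_1(1-\rho)};$$ (iii) if $N_0^1<N_0<N_0^0$, then $s_4^*\in(0,1)$, and with $m_4^*=\bar m_4(s_4^* )$, $$N_0=\frac{\lambda(1-\rho)(m_4^* )^2(1-\theta m_4^* )^2}{\theta\rho\big(\theta m_4^*(m_4^*-2\beta_1)+\beta_1\big)}.$$
   Context: Mean-field model of a dense wireless network with two channel states (BAD with probability $\beta_0$, GOOD with probability $\beta_1$, i.i.d. over slots), packet arrival probability $\rho$ per slot, buffer size one, SINR decoding threshold $\theta<1$, noise power $N_0$, and weight $\lambda$ on queue length. The population is described by the fractions $m_1,\dots,m_4$ of users in states (BAD, empty), (BAD, one packet), (GOOD, empty), (GOOD, one packet). Only users in state (GOOD, one packet) may be scheduled; $s\in[0,1]$ is the fraction of them that transmit. For a constant control $s$, $(\bar m_1(s),\dots,\bar m_4(s))$ is the equilibrium of the fluid dynamics and $E(s)$ the equilibrium average cost. *)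

theory Defs
  imports Complex_Main
begin

definition denom :: "real \<Rightarrow> real \<Rightarrow> real \<Rightarrow> real" where
  "denom b1 rho s = rho + b1 * s * (1 - rho)"

definition mbar1 :: "real \<Rightarrow> real \<Rightarrow> real \<Rightarrow> real" where
  "mbar1 b1 rho s = (1 - b1) * b1 * (1 - rho) * s / denom b1 rho s"

definition mbar2 :: "real \<Rightarrow> real \<Rightarrow> real \<Rightarrow> real" where
  "mbar2 b1 rho s = (1 - b1) * rho / denom b1 rho s"

definition mbar3 :: "real \<Rightarrow> real \<Rightarrow> real \<Rightarrow> real" where
  "mbar3 b1 rho s = b1\<^sup>2 * (1 - rho) * s / denom b1 rho s"

definition mbar4 :: "real \<Rightarrow> real \<Rightarrow> real \<Rightarrow> real" where
  "mbar4 b1 rho s = b1 * rho / denom b1 rho s"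

definition Ecost :: "real \<Rightarrow> real \<Rightarrow> real \<Rightarrow> real \<Rightarrow> real \<Rightarrow> real \<Rightarrow> real" where
  "Ecost b1 rho theta lam N0 s =
     theta * N0 * s / (1 - theta * mbar4 b1 rho s) + lam * (mbar2 b1 rho s + mbar4 b1 rho s)"

definition N0_0 :: "real \<Rightarrow> real \<Rightarrow> real \<Rightarrow> real \<Rightarrow> real" where
  "N0_0 b1 rho theta lam = lam * b1 * (1 - rho) * (1 - theta * b1) / (rho * theta)"

definition N0_1 :: "real \<Rightarrow> real \<Rightarrow> real \<Rightarrow> real \<Rightarrow> real" where
  "N0_1 b1 rho theta lam =
     (lam * b1 * (1 - rho) * rho *
        ((rho + b1 - b1 * rho * (1 + theta))\<^sup>2 / (b1 + rho - b1 * rho)\<^sup>2))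
     / (theta * (2 * b1 * (1 - rho) * rho * (1 - theta * b1) + rho\<^sup>2 * (1 - theta * b1)
                 + b1\<^sup>2 * (1 - rho)\<^sup>2))"

end

theory Submission
  imports Defs
begin

text \<open>Write d = denom b1 rho s and c = theta * b1 * rho, so that theta * mbar4 = c / d. Then
  E(s) = theta * N0 * s * d / (d - c) + lam * rho / d, and E'(s) is a positive multiple of
  N0 - N0_crit d. Under the hypothesis on N0 the threshold N0_crit crosses the level N0 at most
  once, and from above: for rho \<le> d < 2c it exceeds the admissible bound on N0, and for
  d \<ge> max rho (2c) it is strictly decreasing. Hence E is increasing on [0,1] when
  N0 \<ge> N0_crit rho = N0_0, decreasing when N0 \<le> N0_crit (denom 1) = N0_1, and otherwise its
  minimiser is interior with E' = 0 there, i.e. N0 = N0_crit d, which in terms of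
  mbar4 = b1 * rho / d is the stated equation.\<close>

lemma quartic_less_of_lt_twice:
  fixes c r d :: real
  assumes "0 < c" "c < r" "r \<le> d" "d < 2 * c"
  shows "(r - c)\<^sup>2 * d\<^sup>2 * ((d - c)\<^sup>2 + c * (r - c)) < c * r ^ 3 * (d - c)\<^sup>2"
proof -
  have "c * r ^ 3 * (d - c)\<^sup>2 - (r - c)\<^sup>2 * d\<^sup>2 * ((d - c)\<^sup>2 + c * (r - c))
      = r ^ 3 * (d - c)\<^sup>2 * (2 * c - d)
        + (d - r) * ((2 * c - d) * (r - c)\<^sup>2 * d\<^sup>2 + r * c * (r - c) * d * (d - c)
                     + r\<^sup>2 * c * (d - c)\<^sup>2)"
    by (simp add: algebra_simps power2_eq_square power3_eq_cube)
  moreover have "0 < r ^ 3 * (d - c)\<^sup>2 * (2 * c - d)"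
    using assms by simp
  moreover have "0 \<le> (d - r) * ((2 * c - d) * (r - c)\<^sup>2 * d\<^sup>2 + r * c * (r - c) * d * (d - c)
                     + r\<^sup>2 * c * (d - c)\<^sup>2)"
    using assms by (intro mult_nonneg_nonneg add_nonneg_nonneg) auto
  ultimately show ?thesis by linarith
qed

locale channel_params =
  fixes b1 rho theta lam :: real
  assumes b1_pos: "0 < b1" and b1_less_1: "b1 < 1"
    and rho_pos: "0 < rho" and rho_less_1: "rho < 1"
    and theta_pos: "0 < theta" and theta_less_1: "theta < 1"
    and lam_pos: "0 < lam"
begin

definition c :: real where "c = theta * b1 * rho"

definition Q :: "real \<Rightarrow> real" where "Q d = d\<^sup>2 - 2 * c * d + c * rho"

definition N0_crit :: "real \<Rightarrow> real" where
  "N0_crit d = b1 * (1 - rho) * lam * rho * (d - c)\<^sup>2 / (theta * d\<^sup>2 * Q d)"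

definition N0_bound :: real where
  "N0_bound = lam * (1 - rho) * (1 - b1 * theta)\<^sup>2 / (rho * theta\<^sup>2)"

lemma c_pos: "0 < c"
  using b1_pos rho_pos theta_pos by (simp add: c_def)

lemma c_less_rho: "c < rho"
proof -
  have "theta * b1 < b1"
    using b1_pos theta_less_1 by simp
  then have "theta * b1 < 1"
    using b1_less_1 by linarith
  then show ?thesis
    using rho_pos by (simp add: c_def)
qed

lemma Q_eq: "Q d = (d - c)\<^sup>2 + c * (rho - c)"
  by (simp add: Q_def algebra_simps power2_eq_square)

lemma Q_pos: "0 < Q d"
proof -
  have "0 < c * (rho - c)"
    using c_pos c_less_rho by simp
  then show ?thesis
    unfolding Q_eq by (simp add: add_nonneg_pos)
qed

lemma rho_le_denom: "0 \<le> s \<Longrightarrow> rho \<le> denom b1 rho s"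
  using b1_pos rho_less_1 by (simp add: denom_def)

lemma c_less_denom: "0 \<le> s \<Longrightarrow> c < denom b1 rho s"
  using rho_le_denom c_less_rho by fastforce

lemma denom_strict_mono: "s < t \<Longrightarrow> denom b1 rho s < denom b1 rho t"
  using b1_pos rho_less_1 by (simp add: denom_def)

lemma Ecost_closed_form:
  assumes "c < denom b1 rho s"
  shows "Ecost b1 rho theta lam N0 s
    = theta * N0 * s * denom b1 rho s / (denom b1 rho s - c) + lam * rho / denom b1 rho s"
proof -
  define d where "d = denom b1 rho s"
  have "0 < d"
    using assms c_pos by (simp add: d_def)
  have m24: "mbar2 b1 rho s + mbar4 b1 rho s = rho / d"
    by (simp add: mbar2_def mbar4_def d_def add_divide_distrib[symmetric] algebra_simps)
  have m4: "1 - theta * mbar4 b1 rho s = (d - c) / d"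
    using \<open>0 < d\<close> by (simp add: mbar4_def d_def c_def field_simps)
  show ?thesis
    unfolding Ecost_def m24 m4 d_def[symmetric] by simp
qed

lemma Ecost_has_derivative:
  assumes "0 \<le> s"
  shows "\<exists>p>0. (Ecost b1 rho theta lam N0 has_real_derivative
                  p * (N0 - N0_crit (denom b1 rho s))) (at s)"
proof -
  define d where "d = denom b1 rho s"
  have "c < d" "0 < d"
    using c_less_denom[OF assms] c_pos by (auto simp: d_def)
  have "((\<lambda>y. theta * N0 * y * denom b1 rho y / (denom b1 rho y - c) + lam * rho / denom b1 rho y)
         has_real_derivative
           ((theta * N0 * d + b1 * (1 - rho) * (theta * N0 * s)) * (d - c)
              - theta * N0 * s * d * (b1 * (1 - rho))) / ((d - c) * (d - c))
           - lam * rho * (b1 * (1 - rho)) / (d * d)) (at s)"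
    unfolding d_def denom_def using \<open>c < d\<close> \<open>0 < d\<close>
    by (auto intro!: derivative_eq_intros simp: d_def denom_def)
  moreover have "(theta * N0 * d + b1 * (1 - rho) * (theta * N0 * s)) * (d - c)
      - theta * N0 * s * d * (b1 * (1 - rho)) = theta * N0 * Q d"
    by (simp add: d_def denom_def Q_def algebra_simps power2_eq_square)
  ultimately have "((\<lambda>y. theta * N0 * y * denom b1 rho y / (denom b1 rho y - c) + lam * rho / denom b1 rho y)
         has_real_derivative theta * N0 * Q d / (d - c)\<^sup>2 - b1 * (1 - rho) * lam * rho / d\<^sup>2) (at s)"
    by (simp add: power2_eq_square mult.commute mult.left_commute)
  then have "(Ecost b1 rho theta lam N0 has_real_derivative
               theta * N0 * Q d / (d - c)\<^sup>2 - b1 * (1 - rho) * lam * rho / d\<^sup>2) (at s)"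
  proof (rule has_field_derivative_transform_within_open)
    show "open {y. c < denom b1 rho y}"
      unfolding denom_def by (intro open_Collect_less continuous_intros)
  qed (use \<open>c < d\<close> Ecost_closed_form in \<open>auto simp: d_def\<close>)
  moreover have "theta * N0 * Q d / (d - c)\<^sup>2 - b1 * (1 - rho) * lam * rho / d\<^sup>2
      = theta * Q d / (d - c)\<^sup>2 * (N0 - N0_crit d)"
  proof -
    have "Q d \<noteq> 0" "d - c \<noteq> 0" "d \<noteq> 0" "theta \<noteq> 0"
      using Q_pos[of d] \<open>c < d\<close> \<open>0 < d\<close> theta_pos by auto
    then show ?thesis
      by (simp add: N0_crit_def field_simps)
  qed
  moreover have "0 < theta * Q d / (d - c)\<^sup>2"
    using Q_pos[of d] \<open>c < d\<close> theta_pos by simp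
  ultimately show ?thesis
    unfolding d_def by metis
qed

lemma N0_crit_has_derivative:
  assumes "c < d"
  shows "(N0_crit has_real_derivative
           2 * b1 * (1 - rho) * lam * rho * (d - c) * (c\<^sup>2 * (rho - c) - (d - c) ^ 3)
             / (theta * d ^ 3 * (Q d)\<^sup>2)) (at d)"
proof -
  have "0 < d" using assms c_pos by linarith
  define K where "K = b1 * (1 - rho) * lam * rho"
  have deriv: "(N0_crit has_real_derivative
          ((2 * d - 2 * c) * K * (theta * d\<^sup>2 * Q d)
            - K * (d - c)\<^sup>2 * (2 * d * theta * Q d + (2 * d - 2 * c) * (theta * d\<^sup>2)))
          / (theta * d\<^sup>2 * Q d * (theta * d\<^sup>2 * Q d))) (at d)"
    unfolding N0_crit_def[abs_def] Q_def K_def using \<open>0 < d\<close> Q_pos[of d] theta_pos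
    by (auto intro!: derivative_eq_intros simp: Q_def)
  have numerator: "(2 * d - 2 * c) * K * (theta * d\<^sup>2 * Q d)
            - K * (d - c)\<^sup>2 * (2 * d * theta * Q d + (2 * d - 2 * c) * (theta * d\<^sup>2))
      = theta * d * (2 * K * (d - c) * (c\<^sup>2 * (rho - c) - (d - c) ^ 3))"
    by (simp add: Q_def algebra_simps power2_eq_square power3_eq_cube)
  have "Q d \<noteq> 0" "d \<noteq> 0" "theta \<noteq> 0"
    using Q_pos[of d] \<open>0 < d\<close> theta_pos by auto
  then have quotient: "theta * d * (2 * K * (d - c) * (c\<^sup>2 * (rho - c) - (d - c) ^ 3))
        / (theta * d\<^sup>2 * Q d * (theta * d\<^sup>2 * Q d))
      = 2 * K * (d - c) * (c\<^sup>2 * (rho - c) - (d - c) ^ 3) / (theta * d ^ 3 * (Q d)\<^sup>2)"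
    by (simp add: field_simps power2_eq_square power3_eq_cube)
  from deriv[unfolded numerator quotient] show ?thesis
    by (simp add: K_def mult.assoc)
qed

lemma N0_bound_less_N0_crit:
  assumes "rho \<le> d" "d < 2 * c"
  shows "N0_bound < N0_crit d"
proof -
  have "0 < d"
    using assms(1) rho_pos by linarith
  have bound: "N0_bound = lam * (1 - rho) / theta\<^sup>2 * ((rho - c)\<^sup>2 / rho ^ 3)"
    using rho_pos theta_pos by (simp add: N0_bound_def c_def field_simps power2_eq_square power3_eq_cube)
  have crit: "N0_crit d = lam * (1 - rho) / theta\<^sup>2 * (c * (d - c)\<^sup>2 / (d\<^sup>2 * Q d))"
    using rho_pos theta_pos Q_pos[of d] \<open>0 < d\<close>
    by (simp add: N0_crit_def c_def field_simps power2_eq_square)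
  have "(rho - c)\<^sup>2 * (d\<^sup>2 * Q d) < c * (d - c)\<^sup>2 * rho ^ 3"
    using quartic_less_of_lt_twice[OF c_pos c_less_rho assms] by (simp add: Q_eq algebra_simps)
  then have "(rho - c)\<^sup>2 / rho ^ 3 < c * (d - c)\<^sup>2 / (d\<^sup>2 * Q d)"
    using Q_pos[of d] \<open>0 < d\<close> rho_pos by (simp add: divide_simps)
  moreover have "0 < lam * (1 - rho) / theta\<^sup>2"
    using lam_pos rho_less_1 theta_pos by simp
  ultimately show ?thesis
    unfolding bound crit by (rule mult_strict_left_mono)
qed

lemma N0_crit_strict_antimono:
  assumes "rho \<le> d0" "2 * c \<le> d0" "d0 < d1"
  shows "N0_crit d1 < N0_crit d0"
proof (rule DERIV_neg_imp_decreasing_open[OF assms(3)])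
  fix x
  assume "d0 < x" "x < d1"
  then have "c < x - c" "rho - c < x - c"
    using assms by auto
  then have "c\<^sup>2 * (rho - c) < (x - c)\<^sup>2 * (x - c)"
    using c_pos c_less_rho by (intro mult_strict_mono power_strict_mono) auto
  then have "2 * b1 * (1 - rho) * lam * rho * (x - c) * (c\<^sup>2 * (rho - c) - (x - c) ^ 3)
               / (theta * x ^ 3 * (Q x)\<^sup>2) < 0"
    using \<open>c < x - c\<close> c_pos b1_pos rho_pos rho_less_1 lam_pos theta_pos Q_pos[of x]
    by (intro divide_neg_pos mult_pos_neg) (auto simp: power3_eq_cube power2_eq_square)
  moreover have "c < x"
    using \<open>c < x - c\<close> c_pos by linarith
  ultimately show "\<exists>y. (N0_crit has_real_derivative y) (at x) \<and> y < 0"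
    using N0_crit_has_derivative by blast
next
  have "c < x" if "d0 \<le> x" for x
    using that assms(1) c_less_rho by linarith
  then show "continuous_on {d0..d1} N0_crit"
    using N0_crit_has_derivative by (blast intro: DERIV_atLeastAtMost_imp_continuous_on)
qed

lemma N0_crit_single_crossing:
  assumes "rho \<le> d0" "d0 < d1" "N0_crit d0 \<le> N0" "N0 \<le> N0_bound"
  shows "N0_crit d1 < N0"
proof -
  have "2 * c \<le> d0"
    using N0_bound_less_N0_crit[OF assms(1)] assms(3,4) by force
  with N0_crit_strict_antimono[OF assms(1) this assms(2)] assms(3) show ?thesis
    by simp
qed

lemma N0_crit_denom_0: "N0_crit (denom b1 rho 0) = N0_0 b1 rho theta lam"
proof -
  have Q_rho: "Q rho = rho * (rho - c)"
    by (simp add: Q_def algebra_simps power2_eq_square)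
  have "rho - c \<noteq> 0"
    using c_less_rho by simp
  then have "N0_crit rho = b1 * (1 - rho) * lam * (rho - c) / (theta * rho\<^sup>2)"
    using rho_pos theta_pos by (simp add: N0_crit_def Q_rho field_simps power2_eq_square)
  also have "\<dots> = N0_0 b1 rho theta lam"
    using rho_pos theta_pos by (simp add: N0_0_def c_def field_simps power2_eq_square)
  finally show ?thesis
    by (simp add: denom_def)
qed

lemma N0_crit_denom_1: "N0_crit (denom b1 rho 1) = N0_1 b1 rho theta lam"
proof -
  define d where "d = denom b1 rho 1"
  have "0 < d"
    using rho_le_denom[of 1] rho_pos by (simp add: d_def)
  have "rho + b1 - b1 * rho * (1 + theta) = d - c" "b1 + rho - b1 * rho = d"
    "2 * b1 * (1 - rho) * rho * (1 - theta * b1) + rho\<^sup>2 * (1 - theta * b1) + b1\<^sup>2 * (1 - rho)\<^sup>2 = Q d"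
    by (simp_all add: d_def denom_def Q_def c_def algebra_simps power2_eq_square)
  then have "N0_1 b1 rho theta lam
      = lam * b1 * (1 - rho) * rho * ((d - c)\<^sup>2 / d\<^sup>2) / (theta * Q d)"
    unfolding N0_1_def by simp
  then show ?thesis
    unfolding d_def[symmetric] using \<open>0 < d\<close> Q_pos[of d] theta_pos
    by (simp add: N0_crit_def field_simps)
qed

lemma N0_crit_denom_eq_mbar4:
  assumes "0 \<le> s" and m4: "m4 = mbar4 b1 rho s"
  shows "N0_crit (denom b1 rho s)
    = lam * (1 - rho) * m4\<^sup>2 * (1 - theta * m4)\<^sup>2 / (theta * rho * (theta * m4 * (m4 - 2 * b1) + b1))"
proof -
  define d where "d = denom b1 rho s"
  have "0 < d"
    using rho_le_denom[OF assms(1)] rho_pos by (simp add: d_def)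
  then have "0 < m4"
    using b1_pos rho_pos by (simp add: m4 mbar4_def d_def)
  have d_eq: "d = b1 * rho / m4"
    using \<open>0 < d\<close> b1_pos rho_pos by (simp add: m4 mbar4_def d_def)
  define q where "q = theta * m4 * (m4 - 2 * b1) + b1"
  have "0 < b1 * (1 - theta * b1)"
    using b1_pos c_less_rho rho_pos by (simp add: c_def)
  moreover have "q = theta * (m4 - b1)\<^sup>2 + b1 * (1 - theta * b1)"
    by (simp add: q_def algebra_simps power2_eq_square)
  moreover have "0 \<le> theta * (m4 - b1)\<^sup>2"
    using theta_pos by simp
  ultimately have "q \<noteq> 0"
    by linarith
  have diff: "d - c = b1 * rho * (1 - theta * m4) / m4"
    using \<open>0 < m4\<close> by (simp add: d_eq c_def field_simps)
  have square: "d\<^sup>2 = b1\<^sup>2 * rho\<^sup>2 / m4\<^sup>2"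
    by (simp add: d_eq power_divide power_mult_distrib)
  have quad: "Q d = rho\<^sup>2 * b1 * q / m4\<^sup>2"
    using \<open>0 < m4\<close> by (simp add: d_eq q_def Q_def c_def field_simps power2_eq_square)
  show ?thesis
    unfolding d_def[symmetric] q_def[symmetric] N0_crit_def diff square quad
    using \<open>q \<noteq> 0\<close> \<open>0 < m4\<close> b1_pos rho_pos theta_pos
    by (simp add: field_simps power2_eq_square)
qed

end

locale optimal_control = channel_params +
  fixes N0 s4 :: real
  assumes N0_le_bound: "N0 \<le> N0_bound"
    and s4_range: "s4 \<in> {0..1}"
    and s4_min: "\<forall>s\<in>{0..1}. Ecost b1 rho theta lam N0 s4 \<le> Ecost b1 rho theta lam N0 s"
begin

abbreviation E :: "real \<Rightarrow> real" where "E \<equiv> Ecost b1 rho theta lam N0"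

lemma E_continuous_on:
  assumes "0 \<le> a"
  shows "continuous_on {a..b} E"
proof (rule DERIV_atLeastAtMost_imp_continuous_on)
  fix x
  assume "a \<le> x"
  then show "\<exists>y. (E has_real_derivative y) (at x)"
    using Ecost_has_derivative[of x N0] assms by auto
qed

lemma s4_eq_0:
  assumes "N0_0 b1 rho theta lam \<le> N0"
  shows "s4 = 0"
proof (rule ccontr)
  assume "s4 \<noteq> 0"
  then have "0 < s4"
    using s4_range by simp
  have "E 0 < E s4"
  proof (rule DERIV_pos_imp_increasing_open[OF \<open>0 < s4\<close> _ E_continuous_on])
    fix x
    assume "0 < x" "x < s4"
    then have "N0_crit (denom b1 rho x) < N0"
      using N0_crit_single_crossing[OF rho_le_denom denom_strict_mono, of 0 x N0]
        N0_crit_denom_0 assms N0_le_bound by simp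
    then show "\<exists>y. (E has_real_derivative y) (at x) \<and> 0 < y"
      using Ecost_has_derivative[of x N0] \<open>0 < x\<close> by force
  qed simp
  with s4_min show False
    by force
qed

lemma s4_eq_1:
  assumes "N0 \<le> N0_1 b1 rho theta lam"
  shows "s4 = 1"
proof (rule ccontr)
  assume "s4 \<noteq> 1"
  then have "s4 < 1"
    using s4_range by simp
  have "E 1 < E s4"
  proof (rule DERIV_neg_imp_decreasing_open[OF \<open>s4 < 1\<close> _ E_continuous_on])
    fix x
    assume "s4 < x" "x < 1"
    then have "0 \<le> x"
      using s4_range by simp
    have "N0 < N0_crit (denom b1 rho x)"
    proof (rule ccontr)
      assume "\<not> N0 < N0_crit (denom b1 rho x)"
      then have "N0_crit (denom b1 rho 1) < N0"
        using N0_crit_single_crossing[OF rho_le_denom[OF \<open>0 \<le> x\<close>] denom_strict_mono[OF \<open>x < 1\<close>]]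
          N0_le_bound by simp
      with assms show False
        by (simp add: N0_crit_denom_1)
    qed
    then show "\<exists>y. (E has_real_derivative y) (at x) \<and> y < 0"
      using Ecost_has_derivative[OF \<open>0 \<le> x\<close>, of N0] by (force simp: mult_pos_neg)
  qed (use s4_range in simp)
  moreover have "E s4 \<le> E 1"
    using s4_min by simp
  ultimately show False
    by simp
qed

lemma s4_interior:
  assumes "N0_1 b1 rho theta lam < N0" "N0 < N0_0 b1 rho theta lam"
  shows "0 < s4" "s4 < 1"
proof -
  have "s4 \<noteq> 0"
  proof
    assume "s4 = 0"
    obtain p where "0 < p" and deriv: "(E has_real_derivative p * (N0 - N0_0 b1 rho theta lam)) (at 0)"
      using Ecost_has_derivative[of 0 N0] N0_crit_denom_0 by auto
    moreover have "p * (N0 - N0_0 b1 rho theta lam) < 0"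
      using \<open>0 < p\<close> assms(2) by (simp add: mult_pos_neg)
    ultimately obtain h where "0 < h" "h < 1" "E h < E 0"
      using DERIV_neg_dec_right[OF deriv] by (metis add_0 field_lbound_gt_zero zero_less_one)
    moreover have "E 0 \<le> E h"
      using s4_min \<open>s4 = 0\<close> \<open>0 < h\<close> \<open>h < 1\<close> by simp
    ultimately show False
      by simp
  qed
  moreover have "s4 \<noteq> 1"
  proof
    assume "s4 = 1"
    obtain p where "0 < p" and deriv: "(E has_real_derivative p * (N0 - N0_1 b1 rho theta lam)) (at 1)"
      using Ecost_has_derivative[of 1 N0] N0_crit_denom_1 by auto
    moreover have "0 < p * (N0 - N0_1 b1 rho theta lam)"
      using \<open>0 < p\<close> assms(1) by simp
    ultimately obtain h where "0 < h" "h < 1" "E (1 - h) < E 1"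
      using DERIV_pos_inc_left[OF deriv] by (metis field_lbound_gt_zero zero_less_one)
    moreover have "E 1 \<le> E (1 - h)"
      using s4_min \<open>s4 = 1\<close> \<open>0 < h\<close> \<open>h < 1\<close> by simp
    ultimately show False
      by simp
  qed
  ultimately show "0 < s4" "s4 < 1"
    using s4_range by auto
qed

lemma N0_eq_N0_crit_s4:
  assumes "0 < s4" "s4 < 1"
  shows "N0 = N0_crit (denom b1 rho s4)"
proof -
  obtain p where "0 < p" and deriv: "(E has_real_derivative p * (N0 - N0_crit (denom b1 rho s4))) (at s4)"
    using Ecost_has_derivative[of s4 N0] assms by auto
  have "\<forall>y. \<bar>s4 - y\<bar> < min s4 (1 - s4) \<longrightarrow> E s4 \<le> E y"
    using s4_min by (auto simp: abs_if)
  then have "p * (N0 - N0_crit (denom b1 rho s4)) = 0"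
    using DERIV_local_min[OF deriv, of "min s4 (1 - s4)"] assms by simp
  with \<open>0 < p\<close> show ?thesis
    by simp
qed

end

theorem proposition4:
  fixes b1 rho theta lam N0 s4 :: real
  assumes "0 < b1" "b1 < 1"
    and "0 < rho" "rho < 1"
    and "0 < theta" "theta < 1"
    and "0 \<le> lam" and "0 < N0"
    and "N0 \<le> lam * (1 - rho) * (1 - b1 * theta)\<^sup>2 / (rho * theta\<^sup>2)"
    and s4_range: "s4 \<in> {0..1}"
    and s4_min: "\<forall>s\<in>{0..1}. Ecost b1 rho theta lam N0 s4 \<le> Ecost b1 rho theta lam N0 s"
  shows "(N0 \<ge> N0_0 b1 rho theta lam \<longrightarrow>
            s4 = 0 \<and>
            (mbar1 b1 rho s4, mbar2 b1 rho s4, mbar3 b1 rho s4, mbar4 b1 rho s4) = (0, 1 - b1, 0, b1))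
       \<and> (N0 \<le> N0_1 b1 rho theta lam \<longrightarrow>
            s4 = 1 \<and>
            mbar1 b1 rho s4 = (1 - b1) * b1 * (1 - rho) / (b1 * (1 - rho) + rho) \<and>
            mbar2 b1 rho s4 = (1 - b1) * rho / (rho + b1 * (1 - rho)) \<and>
            mbar3 b1 rho s4 = b1\<^sup>2 * (1 - rho) / (rho + b1 * (1 - rho)) \<and>
            mbar4 b1 rho s4 = b1 * rho / (rho + b1 * (1 - rho)))
       \<and> (N0_1 b1 rho theta lam < N0 \<and> N0 < N0_0 b1 rho theta lam \<longrightarrow>
            0 < s4 \<and> s4 < 1 \<and>
            (let m4 = mbar4 b1 rho s4 in
              N0 = lam * (1 - rho) * m4\<^sup>2 * (1 - theta * m4)\<^sup>2
                   / (theta * rho * (theta * m4 * (m4 - 2 * b1) + b1))))"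
proof -
  have "lam \<noteq> 0"
    using assms(8,9) by auto
  then interpret optimal_control b1 rho theta lam N0 s4
    using assms by unfold_locales (auto simp: channel_params.N0_bound_def channel_params_def)
  have "0 < s4 \<and> s4 < 1 \<and> N0 = N0_crit (denom b1 rho s4)"
    if "N0_1 b1 rho theta lam < N0" "N0 < N0_0 b1 rho theta lam"
    using s4_interior[OF that] N0_eq_N0_crit_s4 by simp
  with s4_eq_0 s4_eq_1 N0_crit_denom_eq_mbar4[of s4 "mbar4 b1 rho s4"] s4_range rho_pos
  show ?thesis
    by (auto simp: mbar1_def mbar2_def mbar3_def mbar4_def denom_def Let_def add.commute)
qed

end
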